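(* Let $G$ be a graph with $n$ vertices that is $p$-almost equitably $k$-colorable, where $k \le n$. Then there exists a set $X$ of exactly $\min\{p, n-k\}$ vertices such that $G \setminus X$ has an equitable $k$-coloring.
   Context: A $k$-coloring of a graph is equitable if it partitions the vertex set into $k$ stable sets (color classes) whose sizes pairwise differ by at most one. A graph $G$ is $p$-almost equitably $k$-colorable if there exists a set $X$ of at most $p$ vertices such that $G\setminus X$ has an equitable $k$-coloring. *)

theory Defs
  imports Main
begin

text \<open>G minus X is the induced subgraph on V - X,
represented by restricting attention to the vertex set V - X.\<close>

definition simple_graph :: "'a set \<Rightarrow> ('a \<Rightarrow> 'a \<Rightarrow> bool) \<Rightarrow> bool" where
  "simple_graph V E \<longleftrightarrow> finite V \<and> (\<forall>u v. E u v \<longrightarrow> E v u) \<and> (\<forall>v. \<not> E v v)"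

definition equitable_coloring ::
  "('a \<Rightarrow> 'a \<Rightarrow> bool) \<Rightarrow> 'a set \<Rightarrow> nat \<Rightarrow> ('a \<Rightarrow> nat) \<Rightarrow> bool" where
  "equitable_coloring E S k c \<longleftrightarrow>
     (\<forall>v\<in>S. c v < k) \<and>
     (\<forall>u\<in>S. \<forall>v\<in>S. E u v \<longrightarrow> c u \<noteq> c v) \<and>
     (\<forall>i<k. \<forall>j<k. card {v\<in>S. c v = i} \<le> card {v\<in>S. c v = j} + 1)"

definition equitably_colorable :: "('a \<Rightarrow> 'a \<Rightarrow> bool) \<Rightarrow> 'a set \<Rightarrow> nat \<Rightarrow> bool" where
  "equitably_colorable E S k \<longleftrightarrow> (\<exists>c. equitable_coloring E S k c)"

definition almost_equitably_colorable ::
  "'a set \<Rightarrow> ('a \<Rightarrow> 'a \<Rightarrow> bool) \<Rightarrow> nat \<Rightarrow> nat \<Rightarrow> bool" where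
  "almost_equitably_colorable V E p k \<longleftrightarrow>
     (\<exists>X. X \<subseteq> V \<and> card X \<le> p \<and> equitably_colorable E (V - X) k)"

end

theory Submission
  imports Defs
begin

text \<open>If p < n - k, enlarge the deleted set to exactly p vertices: removing a vertex from
a largest colour class keeps an equitable colouring equitable, since every other class is at
least as large as that class minus one. If p \<ge> n - k, delete any n - k vertices; the k
survivors get pairwise distinct colours, which is trivially equitable.\<close>

lemma equitable_coloring_remove_from_largest_class:
  assumes fin: "finite S" and ne: "S \<noteq> {}" and ec: "equitable_coloring E S k c"
  obtains v where "v \<in> S" and "equitable_coloring E (S - {v}) k c"
proof -
  define f where "f j = card {v\<in>S. c v = j}" for j
  have bal: "f a \<le> f b + 1" if "a < k" "b < k" for a b
    using ec that unfolding equitable_coloring_def f_def by blast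
  obtain w where w: "w \<in> S" using ne by blast
  have cw: "c w < k" using ec w unfolding equitable_coloring_def by blast
  have "Max (f ` {..<k}) \<in> f ` {..<k}"
    using cw by (intro Max_in) auto
  then obtain i where i: "i < k" "f i = Max (f ` {..<k})"
    by auto
  have imax: "f j \<le> f i" if "j < k" for j
    using i that by simp
  have "f (c w) > 0" unfolding f_def using fin w by (subst card_gt_0_iff) auto
  with imax[OF cw] have "f i > 0" by linarith
  then have "{x\<in>S. c x = i} \<noteq> {}"
    unfolding f_def by (metis card.empty less_irrefl)
  then obtain v where v: "v \<in> S" "c v = i"
    by blast
  have size: "card {x\<in>S - {v}. c x = j} = (if j = i then f i - 1 else f j)" for j
  proof -
    have "{x\<in>S - {v}. c x = j} = {x\<in>S. c x = j} - (if j = i then {v} else {})"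
      using v by auto
    then show ?thesis unfolding f_def using v fin by simp
  qed
  have "card {x\<in>S - {v}. c x = a} \<le> card {x\<in>S - {v}. c x = b} + 1"
    if "a < k" "b < k" for a b
    unfolding size using bal[OF that] bal[OF i(1) that(2)] imax[OF that(1)] \<open>f i > 0\<close> by auto
  with ec have "equitable_coloring E (S - {v}) k c"
    unfolding equitable_coloring_def by blast
  with v show thesis using that by blast
qed

lemma equitable_coloring_subset_card:
  assumes "finite S" and "equitable_coloring E S k c" and "m \<le> card S"
  shows "\<exists>T\<subseteq>S. card T = m \<and> equitable_coloring E T k c"
  using assms(3)
proof (induction "card S - m" arbitrary: m)
  case 0
  then have "card S = m" by simp
  with assms(2) show ?case by blast
next
  case (Suc r)
  then have "r = card S - Suc m" "Suc m \<le> card S"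
    by arith+
  then obtain T where T: "T \<subseteq> S" "card T = Suc m" "equitable_coloring E T k c"
    using Suc.hyps(1) by blast
  have "finite T" using T(1) assms(1) finite_subset by blast
  moreover have "T \<noteq> {}" using T(2) by auto
  ultimately obtain v where "v \<in> T" "equitable_coloring E (T - {v}) k c"
    using equitable_coloring_remove_from_largest_class T(3) by blast
  with T \<open>finite T\<close> show ?case by (intro exI[of _ "T - {v}"]) auto
qed

lemma equitable_coloring_if_inj_on:
  assumes "\<And>v. \<not> E v v" and "inj_on c S" and "c ` S \<subseteq> {..<k}"
  shows "equitable_coloring E S k c"
  unfolding equitable_coloring_def
proof (intro conjI ballI allI impI)
  show "c v < k" if "v \<in> S" for v using assms(3) that by blast
  show "c u \<noteq> c v" if "u \<in> S" "v \<in> S" "E u v" for u v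
    using assms(1,2) that unfolding inj_on_def by metis
  fix i j :: nat
  have "card {v\<in>S. c v = i} \<le> card {i}"
    using assms(2) by (intro card_inj_on_le[where f = c]) (auto simp: inj_on_def)
  then show "card {v\<in>S. c v = i} \<le> card {v\<in>S. c v = j} + 1" by simp
qed

lemma equitably_colorable_card_eq:
  assumes "\<And>v. \<not> E v v" and "finite S" and "card S = k"
  shows "equitably_colorable E S k"
proof -
  obtain c where "bij_betw c S {..<k}"
    using assms(2,3) by (metis bij_betw_iff_card finite_lessThan card_lessThan)
  then have "equitable_coloring E S k c"
    using assms(1) by (intro equitable_coloring_if_inj_on) (auto simp: bij_betw_def)
  then show ?thesis unfolding equitably_colorable_def by blast
qed

theorem claim1:
  fixes V :: "'a set" and E :: "'a \<Rightarrow> 'a \<Rightarrow> bool" and p k :: nat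
  assumes "simple_graph V E"
    and "k \<le> card V"
    and "almost_equitably_colorable V E p k"
  shows "\<exists>X. X \<subseteq> V \<and> card X = min p (card V - k) \<and> equitably_colorable E (V - X) k"
proof -
  let ?q = "min p (card V - k)"
  have finV: "finite V" and irrefl: "\<And>v. \<not> E v v"
    using assms(1) unfolding simple_graph_def by auto
  obtain T where T: "T \<subseteq> V" "card T = card V - ?q" "equitably_colorable E T k"
  proof (cases "card V - k \<le> p")
    case True
    obtain T where "T \<subseteq> V" "card T = k"
      using obtain_subset_with_card_n assms(2) by metis
    moreover from \<open>T \<subseteq> V\<close> finV have "finite T"
      by (rule finite_subset)
    ultimately show thesis
      using that True assms(2) irrefl equitably_colorable_card_eq[of E T k] by auto
  next
    case False
    obtain X c where X: "X \<subseteq> V" "card X \<le> p" "equitable_coloring E (V - X) k c"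
      using assms(3) unfolding almost_equitably_colorable_def equitably_colorable_def by blast
    have "card V - p \<le> card (V - X)"
      using X finV by (simp add: card_Diff_subset finite_subset)
    with X finV obtain T where "T \<subseteq> V - X" "card T = card V - p" "equitable_coloring E T k c"
      using equitable_coloring_subset_card[of "V - X" E k c "card V - p"] by auto
    with False show thesis
      using that unfolding equitably_colorable_def by auto
  qed
  show ?thesis
  proof (intro exI conjI)
    show "V - T \<subseteq> V" by blast
    show "card (V - T) = ?q"
      using T(1,2) finV by (simp add: card_Diff_subset finite_subset)
    show "equitably_colorable E (V - (V - T)) k"
      using T(1,3) by (simp add: double_diff)
  qed
qed

end
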